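(* Let $\ell\ge1$, $0<\delta\le1/2$, $\alpha\in\mathbb T$, $R=\{n\in\mathbb N:\|n^\ell\alpha\|>\delta\}$, and $m=\lceil 2^{\ell-1}\delta^{-1}\rceil$. Then $R$ is not $m$-large.
   Context: $\|t\|$ is the distance to the nearest integer. For $m\ge2$, $R\subset\mathbb N$ is $m$-large if every coloring of $\mathbb N$ with $m$ colors contains arbitrarily long monochromatic arithmetic progressions with common difference in $R$. *)

theory Defs
  imports Complex_Main
begin

definition dist_nint :: "real \<Rightarrow> real" where
  "dist_nint t = \<bar>t - of_int (round t)\<bar>"

text \<open>Here the natural numbers are the positive integers.\<close>
definition m_large :: "nat \<Rightarrow> nat set \<Rightarrow> bool" where
  "m_large m R \<longleftrightarrow>
     (\<forall>c :: nat \<Rightarrow> nat. (\<forall>n\<ge>1. c n < m) \<longrightarrow>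
        (\<forall>k. \<exists>a d. a \<ge> 1 \<and> d \<in> R \<and> (\<forall>i<k. c (a + i * d) = c a)))"

end

theory Submission
  imports Defs
begin

text \<open>
  Put \<open>M = \<lceil>2^(l-1)/\<delta>\<rceil>\<close> and \<open>\<beta> = \<alpha>/l!\<close>, and colour a positive integer n
  by the index of the subinterval \<open>[t/M, (t+1)/M)\<close> of the unit interval containing the
  fractional part of \<open>n^l \<beta>\<close>.  Suppose a progression \<open>a, a+d, \<dots>, a+l d\<close> is
  monochromatic and put \<open>x j = (a + j d)^l \<beta>\<close>.  Its l-th forward difference is
  \<open>l! d^l \<beta> = d^l \<alpha>\<close>; splitting \<open>x j\<close> into integer and fractional parts, the l-th
  difference of the integer parts is an integer, while that of the fractional parts,
  which all lie in an interval of length \<open>1/M\<close>, has absolute value at most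
  \<open>2^(l-1)/M \<le> \<delta>\<close>.  Hence \<open>\<parallel>d^l \<alpha>\<parallel> \<le> \<delta>\<close>, i.e. d is not in R.
\<close>

fun fdiff :: "nat \<Rightarrow> (nat \<Rightarrow> real) \<Rightarrow> nat \<Rightarrow> real" where
  "fdiff 0 h = h"
| "fdiff (Suc n) h = fdiff n (\<lambda>j. h (Suc j) - h j)"

lemma fdiff_sum:
  "fdiff n (\<lambda>j. \<Sum>i\<in>S. f i j) x = (\<Sum>i\<in>S. fdiff n (f i) x)"
proof (induction n arbitrary: f)
  case 0
  then show ?case by simp
next
  case (Suc n)
  have "fdiff (Suc n) (\<lambda>j. \<Sum>i\<in>S. f i j) x
      = fdiff n (\<lambda>j. \<Sum>i\<in>S. f i (Suc j) - f i j) x"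
    by (simp add: sum_subtractf)
  also have "\<dots> = (\<Sum>i\<in>S. fdiff n (\<lambda>j. f i (Suc j) - f i j) x)"
    using Suc.IH[of "\<lambda>i j. f i (Suc j) - f i j"] by simp
  finally show ?case by simp
qed

lemma fdiff_cmult: "fdiff n (\<lambda>j. c * f j) x = c * fdiff n f x"
proof (induction n arbitrary: f)
  case 0
  then show ?case by simp
next
  case (Suc n)
  show ?case
    using Suc.IH[of "\<lambda>j. f (Suc j) - f j"] by (simp add: right_diff_distrib)
qed

lemma fdiff_add: "fdiff n (\<lambda>j. f j + g j) x = fdiff n f x + fdiff n g x"
proof (induction n arbitrary: f g)
  case 0
  then show ?case by simp
next
  case (Suc n)
  show ?case
    using Suc.IH[of "\<lambda>j. f (Suc j) - f j" "\<lambda>j. g (Suc j) - g j"]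
    by (simp add: algebra_simps)
qed

lemma fdiff_Ints: "fdiff n (\<lambda>j. of_int (z j)) x \<in> \<int>"
proof (induction n arbitrary: z)
  case 0
  then show ?case by simp
next
  case (Suc n)
  show ?case using Suc.IH[of "\<lambda>j. z (Suc j) - z j"] by simp
qed

text \<open>If \<open>h 0, \<dots>, h n\<close> lie in an interval of length L, then \<open>|\<Delta>\<^sup>n h 0| \<le> 2^(n-1) L\<close>:
  the first differences lie in \<open>[-L, L]\<close>, an interval of length \<open>2L\<close>.\<close>
lemma fdiff_bound:
  assumes "n \<ge> 1" and "\<And>j. j \<le> n \<Longrightarrow> u \<le> h j \<and> h j \<le> u + L"
  shows "\<bar>fdiff n h 0\<bar> \<le> 2 ^ (n - 1) * L"
  using assms
proof (induction n arbitrary: h u L)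
  case 0
  then show ?case by simp
next
  case (Suc n)
  show ?case
  proof (cases "n = 0")
    case True
    then show ?thesis using Suc.prems(2)[of 0] Suc.prems(2)[of 1] by auto
  next
    case False
    have "\<bar>fdiff n (\<lambda>j. h (Suc j) - h j) 0\<bar> \<le> 2 ^ (n - 1) * (2 * L)"
    proof (rule Suc.IH[where u="-L"])
      show "1 \<le> n" using False by simp
      fix j
      assume "j \<le> n"
      then have "u \<le> h (Suc j) \<and> h (Suc j) \<le> u + L" and "u \<le> h j \<and> h j \<le> u + L"
        using Suc.prems(2)[of "Suc j"] Suc.prems(2)[of j] by simp_all
      then show "- L \<le> h (Suc j) - h j \<and> h (Suc j) - h j \<le> - L + 2 * L" by linarith
    qed
    moreover have "(2::real) ^ (Suc n - 1) = 2 ^ (n - 1) * 2"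
      using False by (cases n) auto
    ultimately show ?thesis by (simp add: mult.assoc)
  qed
qed

lemma fdiff_power:
  assumes "k \<le> n"
  shows "fdiff n (\<lambda>j. real j ^ k) x = (if k = n then fact n else 0)"
  using assms
proof (induction n arbitrary: k x)
  case 0
  then show ?case by simp
next
  case (Suc n)
  have shift: "real (Suc j) ^ k - real j ^ k = (\<Sum>i<k. real (k choose i) * real j ^ i)"
    for j :: nat
    using binomial_ring[of "real j" 1 k]
    by (simp add: lessThan_Suc_atMost[symmetric] add.commute)
  have "fdiff (Suc n) (\<lambda>j. real j ^ k) x
       = fdiff n (\<lambda>j. \<Sum>i<k. real (k choose i) * real j ^ i) x"
    by (simp only: fdiff.simps shift)
  also have "\<dots> = (\<Sum>i<k. real (k choose i) * fdiff n (\<lambda>j. real j ^ i) x)"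
    by (simp add: fdiff_sum fdiff_cmult)
  also have "\<dots> = (\<Sum>i<k. if i = n then real (k choose i) * fact n else 0)"
    by (rule sum.cong) (use Suc.prems in \<open>auto simp: Suc.IH\<close>)
  also have "\<dots> = (if k = Suc n then fact (Suc n) else 0)"
    using Suc.prems by (auto simp: sum.delta algebra_simps)
  finally show ?case .
qed

lemma fdiff_progression_power:
  "fdiff l (\<lambda>j. (a + real j * d) ^ l) x = fact l * d ^ l"
proof -
  define b where "b k = real (l choose k) * d ^ k * a ^ (l - k)" for k
  have expand: "(a + real j * d) ^ l = (\<Sum>k\<le>l. b k * real j ^ k)" for j :: nat
    using binomial_ring[of "real j * d" a l]
    by (simp add: b_def add.commute power_mult_distrib algebra_simps)
  have "fdiff l (\<lambda>j. (a + real j * d) ^ l) x = (\<Sum>k\<le>l. b k * fdiff l (\<lambda>j. real j ^ k) x)"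
    by (simp add: expand fdiff_sum fdiff_cmult)
  also have "\<dots> = (\<Sum>k\<le>l. if k = l then b k * fact l else 0)"
    by (rule sum.cong) (auto simp: fdiff_power)
  also have "\<dots> = fact l * d ^ l"
    by (simp add: sum.delta b_def)
  finally show ?thesis .
qed

lemma dist_nint_le: "dist_nint t \<le> \<bar>t - of_int z\<bar>"
proof -
  have r1: "t - 1/2 < of_int (round t)" and r2: "of_int (round t) \<le> t + 1/2"
    using of_int_round_gt[of t] of_int_round_le[of t] by auto
  consider "z \<le> round t - 1" | "z = round t" | "z \<ge> round t + 1" by linarith
  then show ?thesis
  proof cases
    case 1
    then have "real_of_int z \<le> of_int (round t) - 1" by linarith
    then show ?thesis unfolding dist_nint_def using r1 r2 by linarith
  next
    case 2
    then show ?thesis unfolding dist_nint_def by simp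
  next
    case 3
    then have "real_of_int z \<ge> of_int (round t) + 1" by linarith
    then show ?thesis unfolding dist_nint_def using r1 r2 by linarith
  qed
qed

text \<open>Key estimate: if the fractional parts of \<open>x 0, \<dots>, x n\<close> lie in an interval of
  length L, then \<open>\<Delta>\<^sup>n x 0\<close> is within \<open>2^(n-1) L\<close> of an integer, because the n-th
  difference of the integer parts is itself an integer.\<close>
lemma dist_nint_fdiff_le:
  assumes "n \<ge> 1" and "\<And>j. j \<le> n \<Longrightarrow> u \<le> frac (x j) \<and> frac (x j) \<le> u + L"
  shows "dist_nint (fdiff n x 0) \<le> 2 ^ (n - 1) * L"
proof -
  have split: "fdiff n x 0 = fdiff n (\<lambda>j. of_int \<lfloor>x j\<rfloor>) 0 + fdiff n (\<lambda>j. frac (x j)) 0"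
    using fdiff_add[of n "\<lambda>j. of_int \<lfloor>x j\<rfloor>" "\<lambda>j. frac (x j)" 0] by (simp add: frac_def)
  obtain z where z: "fdiff n (\<lambda>j. of_int \<lfloor>x j\<rfloor>) 0 = of_int z"
    using fdiff_Ints[of n "\<lambda>j. \<lfloor>x j\<rfloor>" 0] by (auto elim: Ints_cases)
  have "\<bar>fdiff n (\<lambda>j. frac (x j)) 0\<bar> \<le> 2 ^ (n - 1) * L"
    using fdiff_bound[of n u "\<lambda>j. frac (x j)" L] assms by blast
  then show ?thesis
    using dist_nint_le[of "fdiff n x 0" z] split z by simp
qed

definition frac_colour :: "nat \<Rightarrow> real \<Rightarrow> nat" where
  "frac_colour M y = nat \<lfloor>real M * frac y\<rfloor>"

lemma frac_colour_less:
  assumes "M > 0"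
  shows "frac_colour M y < M"
proof -
  have "real M * frac y < real M"
    using assms frac_lt_1[of y] by simp
  then have "\<lfloor>real M * frac y\<rfloor> < int M"
    by (simp add: floor_less_iff)
  then show ?thesis unfolding frac_colour_def using assms by simp
qed

lemma frac_colour_interval:
  assumes "M > 0"
  shows "real (frac_colour M y) / M \<le> frac y \<and> frac y \<le> real (frac_colour M y) / M + 1 / M"
proof -
  have "0 \<le> real M * frac y" using frac_ge_0[of y] by simp
  then have "real (frac_colour M y) = of_int \<lfloor>real M * frac y\<rfloor>"
    unfolding frac_colour_def by simp
  then have "real (frac_colour M y) \<le> real M * frac y \<and> real M * frac y < real (frac_colour M y) + 1"
    by linarith
  then show ?thesis using assms by (simp add: field_simps)
qed

lemma ceiling_colours:
  assumes "c > 0" and "\<delta> > 0"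
  shows "nat \<lceil>c / \<delta>\<rceil> > 0" and "c / real (nat \<lceil>c / \<delta>\<rceil>) \<le> \<delta>"
proof -
  have ceil: "c \<le> \<delta> * of_int \<lceil>c / \<delta>\<rceil>"
    using mult_left_mono[OF le_of_int_ceiling[of "c / \<delta>"], of \<delta>] assms by simp
  then have "\<lceil>c / \<delta>\<rceil> > 0"
    using assms by (smt (verit) mult_nonneg_nonpos of_int_le_0_iff)
  then show "nat \<lceil>c / \<delta>\<rceil> > 0" by simp
  with ceil assms show "c / real (nat \<lceil>c / \<delta>\<rceil>) \<le> \<delta>"
    by (simp add: field_simps)
qed

text \<open>The colouring \<open>n \<mapsto> frac_colour M (n^l \<alpha>/l!)\<close> with \<open>M = \<lceil>2^(l-1)/\<delta>\<rceil>\<close> colours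
  has no monochromatic progression of length \<open>l+1\<close> with difference in R.  (The
  hypothesis \<open>\<delta> \<le> 1/2\<close> only ensures that R can be nonempty; the argument does not use it.)\<close>
theorem mainTheorem19:
  fixes l :: nat and \<delta> \<alpha> :: real
  assumes "l \<ge> 1" and "0 < \<delta>" and "\<delta> \<le> 1/2"
  shows "\<not> m_large (nat \<lceil>2 ^ (l - 1) / \<delta>\<rceil>)
                 {n :: nat. n \<ge> 1 \<and> dist_nint (real n ^ l * \<alpha>) > \<delta>}"
proof
  define M where "M = nat \<lceil>2 ^ (l - 1) / \<delta>\<rceil>"
  define \<beta> where "\<beta> = \<alpha> / fact l"
  have M_pos: "M > 0" and M_small: "2 ^ (l - 1) / real M \<le> \<delta>"
    using ceiling_colours[of "2 ^ (l - 1)" \<delta>] assms(2) unfolding M_def by simp_all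
  define colour where "colour n = frac_colour M (real n ^ l * \<beta>)" for n :: nat
  assume "m_large M {n. n \<ge> 1 \<and> dist_nint (real n ^ l * \<alpha>) > \<delta>}"
  moreover have "\<forall>n\<ge>1. colour n < M"
    using frac_colour_less[OF M_pos] unfolding colour_def by blast
  ultimately obtain a d where "d \<ge> 1" "dist_nint (real d ^ l * \<alpha>) > \<delta>"
    and mono: "\<forall>i<Suc l. colour (a + i * d) = colour a"
    unfolding m_large_def by blast
  define x where "x = (\<lambda>j::nat. \<beta> * (real a + real j * real d) ^ l)"
  have "fdiff l x 0 = \<beta> * (fact l * real d ^ l)"
    by (simp add: x_def fdiff_cmult fdiff_progression_power)
  then have "fdiff l x 0 = real d ^ l * \<alpha>"
    by (simp add: \<beta>_def)
  moreover have "dist_nint (fdiff l x 0) \<le> 2 ^ (l - 1) * (1 / real M)"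
  proof (rule dist_nint_fdiff_le[OF assms(1)])
    fix j
    assume "j \<le> l"
    then have "colour (a + j * d) = colour a"
      using mono by simp
    moreover have "x j = real (a + j * d) ^ l * \<beta>"
      by (simp add: x_def mult.commute)
    ultimately have "frac_colour M (x j) = colour a"
      by (simp add: colour_def)
    then show "real (colour a) / M \<le> frac (x j) \<and> frac (x j) \<le> real (colour a) / M + 1 / M"
      using frac_colour_interval[OF M_pos, of "x j"] by simp
  qed
  ultimately show False
    using \<open>dist_nint (real d ^ l * \<alpha>) > \<delta>\<close> M_small by simp
qed

end
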